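(* Under the same setting as the context (line-of-sight-only channel $\mathbf{h}_k=\alpha_k\mathbf{a}(\theta_k)$ with $\alpha_k\neq 0$), let $\hat\alpha\in\mathbb{C}\setminus\{0\}$ be arbitrary. Then $\phi\mapsto\gamma(\hat\alpha\,\mathbf{a}(\phi),\mathbf{F}_k,\mathbf{y}_k)$ attains its maximum over $[-\pi,\pi)$, and every maximizer $$\bar\phi^\star\in\arg\max_{\phi\in[-\pi,\pi)}\gamma(\hat\alpha\,\mathbf{a}(\phi),\mathbf{F}_k,\mathbf{y}_k)$$ satisfies $\mathbf{a}(\bar\phi^\star)=\mathbf{a}(\theta_k)$.
   Context: Let $N\ge 2$, $p_{\rm t}>0$, $\sigma^2>0$, and fix $k\in\{1,\dots,N\}$. The array response vector is $\mathbf{a}(\theta)=(1,e^{j\pi\sin\theta},\dots,e^{j\pi(N-1)\sin\theta})^{\mathsf T}\in\mathbb{C}^N$. $\mathbf{U}_N$ is the normalized DFT matrix, $\mathbf{U}_N(a,b)=\frac{1}{\sqrt N}e^{-j2\pi(a-1)(b-1)/N}$; $\mathbf{C}_N(i,k)=((i-k)\bmod N)+1$; and for $k'\in\{1,\dots,N\}$, $\mathbf{F}_{k'}$ is the matrix whose $n$-th column $\mathbf{p}_{[n,k']}$ is the $\mathbf{C}_N(n,k')$-th column of $\mathbf{U}_N$. For $n\in\{1,\dots,N\}$, $\mathbf{P}_n$ is the matrix whose $k'$-th column is $\mathbf{p}_{[n,k']}$. A symbol vector $\mathbf{s}\in\mathbb{C}^N$ with $\mathbb{E}[\mathbf{s}\mathbf{s}^{\mathsf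 H}]=\mathbf{I}_N$ is sent with $\mathbf{x}_n=\frac{1}{\sqrt N}\mathbf{P}_n\mathbf{s}$; device $k$ receives $\mathbf{y}_k=(y_{[1,k]},\dots,y_{[N,k]})^{\mathsf T}$ with $y_{[n,k]}=\sqrt{p_{\rm t}}\mathbf{h}_k^{\mathsf H}\mathbf{x}_n+z_{[n,k]}$, so that $\mathbf{y}_k=\sqrt{p_{\rm t}/N}\sum_{k'=1}^N\mathbf{s}(k')\mathbf{F}_{k'}^{\mathsf T}\mathbf{h}_k^{*}+\mathbf{z}_k$, where $\mathbf{z}_k$ is independent of $\mathbf{s}$, zero mean, with $\mathbb{E}[\mathbf{z}_k\mathbf{z}_k^{\mathsf H}]=\sigma^2\mathbf{I}_N$. For a candidate channel $\mathbf{h}\in\mathbb{C}^N$ with all entries nonzero, let $\tilde{\mathbf{h}}=\mathbf{1}_N\oslash(\mathbf{h}^* )$ (entrywise division), $g(\mathbf{h})=\tilde{\mathbf{h}}^{\mathsf T}\mathbf{F}_k^*\mathbf{F}_k^{\mathsf T}\mathbf{h}_k^*$, $v_{k'}(\mathbf{h})=\tilde{\mathbf{h}}^{\mathsf T}\mathbf{F}_k^*\mathbf{F}_{k'}^{\mathsf T}\mathbf{h}_k^*$, so that the combined signal $\tilde{\mathbf{h}}^{\mathsf T}\mathbf{F}_k^*\mathbf{y}_k=P+I$ with $P=\sqrt{p_{\rm t}/N}\,\mathbf{s}(k)g(\mathbf{h})$ and $I=\sqrt{p_{\rm t}/N}\sum_{k'\neq k}\mathbf{s}(k')v_{k'}(\mathbf{h})+\tilde{\mathbf{h}}^{\mathsf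 T}\mathbf{F}_k^*\mathbf{z}_k$. The SINR is $\gamma(\mathbf{h},\mathbf{F}_k,\mathbf{y}_k)=\mathbb{E}[|P|^2]/\mathbb{E}[|I|^2]$, expectations over $\mathbf{s}$ and $\mathbf{z}_k$. *)

theory Defs
  imports "HOL-Probability.Probability"
begin

(* All vectors/matrices use the paper's 1-based indexing: a vector in C^N is a
   function nat => complex read on {1..N}; a matrix is nat => nat => complex read
   on {1..N} x {1..N}. *)

definition arr :: "real \<Rightarrow> nat \<Rightarrow> complex" where
  "arr \<theta> n = cis (pi * real (n - 1) * sin \<theta>)"

definition dftU :: "nat \<Rightarrow> nat \<Rightarrow> nat \<Rightarrow> complex" where
  "dftU N a b = cis (- 2 * pi * real (a - 1) * real (b - 1) / real N) / complex_of_real (sqrt (real N))"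

definition circC :: "nat \<Rightarrow> nat \<Rightarrow> nat \<Rightarrow> nat" where
  "circC N i k = nat ((int i - int k) mod int N) + 1"

definition Fmat :: "nat \<Rightarrow> nat \<Rightarrow> nat \<Rightarrow> nat \<Rightarrow> complex" where
  "Fmat N k' a n = dftU N a (circC N n k')"

definition htilde :: "(nat \<Rightarrow> complex) \<Rightarrow> nat \<Rightarrow> complex" where
  "htilde h n = 1 / cnj (h n)"

(* v_{k'}(h) = h~^T F_k^* F_{k'}^T h_k^* ; g(h) = v_k(h) *)
definition vfun :: "nat \<Rightarrow> nat \<Rightarrow> nat \<Rightarrow> (nat \<Rightarrow> complex) \<Rightarrow> (nat \<Rightarrow> complex) \<Rightarrow> complex" where
  "vfun N k k' hk h =
     (\<Sum>a\<in>{1..N}. \<Sum>n\<in>{1..N}. \<Sum>b\<in>{1..N}.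
        htilde h a * cnj (Fmat N k a n) * Fmat N k' b n * cnj (hk b))"

definition gfun :: "nat \<Rightarrow> nat \<Rightarrow> (nat \<Rightarrow> complex) \<Rightarrow> (nat \<Rightarrow> complex) \<Rightarrow> complex" where
  "gfun N k hk h = vfun N k k hk h"

definition Psig :: "nat \<Rightarrow> real \<Rightarrow> nat \<Rightarrow> (nat \<Rightarrow> complex) \<Rightarrow> (nat \<Rightarrow> 'a \<Rightarrow> complex)
                    \<Rightarrow> (nat \<Rightarrow> complex) \<Rightarrow> 'a \<Rightarrow> complex" where
  "Psig N pt k hk s h \<omega> = complex_of_real (sqrt (pt / real N)) * s k \<omega> * gfun N k hk h"

definition Iint :: "nat \<Rightarrow> real \<Rightarrow> nat \<Rightarrow> (nat \<Rightarrow> complex) \<Rightarrow> (nat \<Rightarrow> 'a \<Rightarrow> complex)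
                    \<Rightarrow> (nat \<Rightarrow> 'a \<Rightarrow> complex) \<Rightarrow> (nat \<Rightarrow> complex) \<Rightarrow> 'a \<Rightarrow> complex" where
  "Iint N pt k hk s z h \<omega> =
     complex_of_real (sqrt (pt / real N)) * (\<Sum>k'\<in>{1..N} - {k}. s k' \<omega> * vfun N k k' hk h)
     + (\<Sum>a\<in>{1..N}. \<Sum>n\<in>{1..N}. htilde h a * cnj (Fmat N k a n) * z n \<omega>)"

definition SINR :: "'a measure \<Rightarrow> nat \<Rightarrow> real \<Rightarrow> nat \<Rightarrow> (nat \<Rightarrow> complex) \<Rightarrow> (nat \<Rightarrow> 'a \<Rightarrow> complex)
                    \<Rightarrow> (nat \<Rightarrow> 'a \<Rightarrow> complex) \<Rightarrow> (nat \<Rightarrow> complex) \<Rightarrow> real" where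
  "SINR M N pt k hk s z h =
     integral\<^sup>L M (\<lambda>\<omega>. (cmod (Psig N pt k hk s h \<omega>))\<^sup>2)
     / integral\<^sup>L M (\<lambda>\<omega>. (cmod (Iint N pt k hk s z h \<omega>))\<^sup>2)"

end

theory Submission
  imports Defs
begin

text \<open>For a candidate channel \<open>\<alpha>h a(\<phi>)\<close> the combiner turns each coefficient
  \<open>v\<^sub>k\<^sub>'\<close> into a DFT coefficient of the unit-modulus sequence
  \<open>(\<alpha>/\<alpha>h) a(\<phi>)\<^sub>n conj(a(\<theta>)\<^sub>n)\<close>. By Parseval the total energy
  \<open>\<Sum>\<^sub>k\<^sub>' |v\<^sub>k\<^sub>'|\<^sup>2 = N\<^sup>2 |\<alpha>/\<alpha>h|\<^sup>2\<close> does not depend on \<open>\<phi>\<close>, and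
  neither does the combined noise power, because the rows of \<open>F\<^sub>k\<close> are orthonormal. So the
  SINR is an increasing function of the desired gain \<open>|g|\<^sup>2\<close>, which is
  \<open>|\<alpha>/\<alpha>h|\<^sup>2 |a(\<phi>)\<^sup>H a(\<theta>)|\<^sup>2 \<le> |\<alpha>/\<alpha>h|\<^sup>2 N\<^sup>2\<close>. Equality in this triangle
  inequality forces all terms \<open>a(\<phi>)\<^sub>n conj(a(\<theta>)\<^sub>n)\<close> to equal the first one, which is
  \<open>1\<close>, i.e. \<open>a(\<phi>) = a(\<theta>)\<close>; and \<open>\<phi> = arcsin (sin \<theta>)\<close> attains it.\<close>

lemma cmod_power2_eq_Re: "(cmod x)\<^sup>2 = Re (x * cnj x)"
  by (simp add: complex_mult_cnj cmod_def)

lemma (in finite_measure) integrable_of_integrable_mult_cnj: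
  fixes f :: "'a \<Rightarrow> complex"
  assumes f: "f \<in> borel_measurable M" and "integrable M (\<lambda>\<omega>. f \<omega> * cnj (f \<omega>))"
  shows "integrable M f"
proof -
  have "integrable M (\<lambda>\<omega>. (cmod (f \<omega>))\<^sup>2)"
    using integrable_norm[OF assms(2)] by (simp add: norm_mult power2_eq_square)
  moreover have "(\<lambda>\<omega>. cmod (f \<omega>)) \<in> borel_measurable M"
    using f by simp
  ultimately have "integrable M (\<lambda>\<omega>. cmod (f \<omega>))"
    using square_integrable_imp_integrable by blast
  then show ?thesis
    using f integrable_norm_iff by blast
qed

lemma integral_cmod_sum_power2:
  fixes X :: "'i \<Rightarrow> 'a \<Rightarrow> complex"
  assumes I: "finite I"
    and int: "\<And>i j. i \<in> I \<Longrightarrow> j \<in> I \<Longrightarrow> integrable M (\<lambda>\<omega>. X i \<omega> * cnj (X j \<omega>))"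
  shows "(\<integral>\<omega>. (cmod (\<Sum>i\<in>I. c i * X i \<omega>))\<^sup>2 \<partial>M)
       = Re (\<Sum>i\<in>I. \<Sum>j\<in>I. c i * cnj (c j) * (\<integral>\<omega>. X i \<omega> * cnj (X j \<omega>) \<partial>M))"
proof -
  let ?Q = "\<lambda>\<omega>. \<Sum>i\<in>I. \<Sum>j\<in>I. c i * cnj (c j) * (X i \<omega> * cnj (X j \<omega>))"
  have sq: "(cmod (\<Sum>i\<in>I. c i * X i \<omega>))\<^sup>2 = Re (?Q \<omega>)" for \<omega>
    unfolding cmod_power2_eq_Re by (simp add: cnj_sum sum_product mult_ac)
  have "integrable M ?Q"
    using int by (auto intro!: integrable_sum integrable_mult_right)
  then show ?thesis
    unfolding sq integral_Re[OF \<open>integrable M ?Q\<close>] using I int by (simp add: integral_sum)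
qed

lemma integral_cmod_sum_power2_uncorrelated:
  fixes X :: "'i \<Rightarrow> 'a \<Rightarrow> complex"
  assumes I: "finite I"
    and cov: "\<And>i j. i \<in> I \<Longrightarrow> j \<in> I \<Longrightarrow> integrable M (\<lambda>\<omega>. X i \<omega> * cnj (X j \<omega>)) \<and>
                (\<integral>\<omega>. X i \<omega> * cnj (X j \<omega>) \<partial>M) = (if i = j then of_real (var i) else 0)"
  shows "(\<integral>\<omega>. (cmod (\<Sum>i\<in>I. c i * X i \<omega>))\<^sup>2 \<partial>M) = (\<Sum>i\<in>I. (cmod (c i))\<^sup>2 * var i)"
proof -
  have "(\<Sum>j\<in>I. c i * cnj (c j) * (\<integral>\<omega>. X i \<omega> * cnj (X j \<omega>) \<partial>M)) = c i * cnj (c i) * of_real (var i)"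
    if "i \<in> I" for i
    using I that cov by (simp add: if_distrib[of "\<lambda>x. _ * x"] cong: if_cong)
  then have "(\<Sum>i\<in>I. \<Sum>j\<in>I. c i * cnj (c j) * (\<integral>\<omega>. X i \<omega> * cnj (X j \<omega>) \<partial>M))
      = of_real (\<Sum>i\<in>I. (cmod (c i))\<^sup>2 * var i)"
    by (simp flip: complex_norm_square)
  then show ?thesis
    using I cov by (simp only: integral_cmod_sum_power2 Re_complex_of_real)
qed

lemma norm_sum_unit_ge_card_imp_eq:
  fixes u :: "'b \<Rightarrow> complex"
  assumes A: "finite A" and unit: "\<forall>a\<in>A. cmod (u a) = 1"
    and big: "real (card A) \<le> cmod (\<Sum>a\<in>A. u a)" and a: "a \<in> A"
  shows "u a * of_nat (card A) = (\<Sum>a\<in>A. u a)"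
proof -
  define w where "w = (\<Sum>a\<in>A. u a)"
  define n where "n = real (card A)"
  have "cmod w \<le> (\<Sum>a\<in>A. cmod (u a))"
    unfolding w_def by (rule norm_sum)
  then have w: "cmod w = n"
    using big unit by (simp add: w_def n_def)
  have le: "Re (u b * cnj w) \<le> n" if "b \<in> A" for b
    using complex_Re_le_cmod[of "u b * cnj w"] unit that w by (simp add: norm_mult)
  have "(\<Sum>b\<in>A. Re (u b * cnj w)) = Re (w * cnj w)"
    unfolding w_def by (simp add: sum_distrib_right)
  also have "\<dots> = n * n"
    by (metis cmod_power2_eq_Re w power2_eq_square)
  finally have "(\<Sum>b\<in>A. n - Re (u b * cnj w)) = 0"
    by (simp add: sum_subtractf n_def)
  then have Re_eq: "Re (u a * cnj w) = n"
    using sum_nonneg_eq_0_iff[of A "\<lambda>b. n - Re (u b * cnj w)"] A le a by auto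
  moreover have "cmod (u a * cnj w) = n"
    using unit a w by (simp add: norm_mult)
  ultimately have "Im (u a * cnj w) = 0"
    using cmod_power2[of "u a * cnj w"] by simp
  with Re_eq have uw: "u a * cnj w = of_real n"
    by (simp add: complex_eq_iff)
  have "cnj w * w = of_real n * of_real n"
    using w by (simp add: complex_norm_square[symmetric] mult.commute power2_eq_square)
  then have "of_real n * (u a * of_real n - w) = (u a * cnj w) * w - of_real n * w"
    by (simp add: algebra_simps)
  also have "\<dots> = 0"
    by (simp add: uw)
  finally have "of_real n * (u a * of_real n - w) = 0" .
  moreover have "n \<noteq> 0"
    using a A by (auto simp: n_def)
  ultimately show ?thesis
    by (simp add: w_def n_def)
qed

lemma gain_fraction_max:
  fixes B C G K :: real
  assumes B: "B > 0" and C: "C > 0" and G: "G \<le> K" and K: "K \<ge> 0"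
  shows "B * G / (B * (K - G) + C) \<le> B * K / C"
    and "B * K / C \<le> B * G / (B * (K - G) + C) \<Longrightarrow> K \<le> G"
proof -
  define D where "D = B * (K - G) + C"
  have D: "D > 0"
    unfolding D_def using B C G by (simp add: add_nonneg_pos)
  have key: "B * K * D - B * G * C = (K - G) * (B * B * K + B * C)"
    by (simp add: D_def algebra_simps)
  have pos: "B * B * K + B * C > 0"
    using B C K by (simp add: add_nonneg_pos)
  then have "B * G * C \<le> B * K * D"
    using key G by (smt (verit) mult_nonneg_nonneg)
  then show "B * G / (B * (K - G) + C) \<le> B * K / C"
    unfolding D_def[symmetric] using D C by (simp add: divide_simps)
  assume "B * K / C \<le> B * G / (B * (K - G) + C)"
  then have "B * K * D \<le> B * G * C"
    unfolding D_def[symmetric] using D C by (simp add: divide_simps)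
  then have "(K - G) * (B * B * K + B * C) \<le> 0"
    using key by linarith
  then show "K \<le> G"
    using pos by (simp add: mult_le_0_iff)
qed

definition dft_cis :: "nat \<Rightarrow> real \<Rightarrow> complex" where
  "dft_cis N x = cis (2 * pi * x / real N)"

lemma dft_cis_add: "dft_cis N (x + y) = dft_cis N x * dft_cis N y"
  by (simp add: dft_cis_def cis_mult add_divide_distrib distrib_left)

lemma cnj_dft_cis: "cnj (dft_cis N x) = dft_cis N (- x)"
  by (simp add: dft_cis_def cis_cnj)

lemma dft_cis_power: "dft_cis N x ^ n = dft_cis N (real n * x)"
  unfolding dft_cis_def Complex.DeMoivre by (simp add: times_divide_eq_right mult_ac)

lemma dft_cis_multiple:
  assumes "N > 0"
  shows "dft_cis N (real N * of_int j) = 1"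
proof -
  have "2 * pi * (real N * of_int j) / real N = 2 * pi * of_int j"
    using assms by simp
  then show ?thesis
    by (simp add: dft_cis_def)
qed

lemma sum_dft_cis:
  assumes N: "N > 0"
  shows "(\<Sum>n\<in>{1..N}. dft_cis N (of_int m * real n)) = (if int N dvd m then of_nat N else 0)"
proof (cases "int N dvd m")
  case True
  then obtain j where "m = int N * j"
    by (auto elim: dvdE)
  then have "dft_cis N (of_int m * real n) = 1" for n
    using dft_cis_multiple[OF N, of "j * int n"] by (simp add: mult_ac)
  then show ?thesis
    using True by simp
next
  case False
  define q where "q = dft_cis N (of_int m)"
  have "q \<noteq> 1"
  proof
    assume "q = 1"
    then have "cos (2 * pi * of_int m / real N) = 1"
      unfolding q_def dft_cis_def by (metis cis.sel(1) one_complex.sel(1))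
    then obtain j :: int where "2 * pi * of_int m / real N = of_int j * 2 * pi"
      using cos_one_2pi_int by blast
    then have "m = int N * j"
      using N by (simp add: field_simps) (metis of_int_eq_iff of_int_mult of_int_of_nat_eq)
    then show False
      using False by simp
  qed
  moreover have "q ^ N = 1"
    unfolding q_def dft_cis_power using dft_cis_multiple[OF N, of m] by simp
  ultimately have "(\<Sum>n\<in>{1..N}. q ^ n) = 0"
    by (simp add: sum_gp)
  then show ?thesis
    using False by (simp add: q_def dft_cis_power mult.commute)
qed

lemma sum_dft_cis_diff:
  assumes N: "N > 0" and a: "a \<in> {1..N}" and b: "b \<in> {1..N}"
  shows "(\<Sum>n\<in>{1..N}. dft_cis N (of_int (int a - int b) * real n)) = (if a = b then of_nat N else 0)"
proof -
  have "int N dvd (int a - int b) \<longleftrightarrow> a = b"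
  proof
    assume d: "int N dvd (int a - int b)"
    show "a = b"
    proof (rule ccontr)
      assume "a \<noteq> b"
      then have "int N \<le> \<bar>int a - int b\<bar>"
        using dvd_imp_le_int[OF _ d] by simp
      then show False
        using a b by auto
    qed
  qed simp
  then show ?thesis
    using sum_dft_cis[OF N, of "int a - int b"] by simp
qed

text \<open>The cyclic column shift of \<open>F\<^sub>k\<close> is invisible in its entries because
  the exponent only matters modulo \<open>N\<close>.\<close>

lemma Fmat_eq_dft_cis:
  assumes N: "N > 0"
  shows "Fmat N k a n = cnj (dft_cis N (real (a - 1) * (real n - real k))) / of_real (sqrt (real N))"
proof -
  define d where "d = int n - int k"
  define q where "q = d div int N"
  define m where "m = d mod int N"
  have c: "real (circC N n k - 1) = of_int m"
    using N by (simp add: circC_def d_def m_def)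
  have "d = int N * q + m"
    unfolding m_def q_def by simp
  then have dm: "real n - real k = real N * of_int q + of_int m"
    unfolding d_def by (metis of_int_add of_int_diff of_int_mult of_int_of_nat_eq)
  have e: "- 2 * pi * real (a - 1) * real (circC N n k - 1) / real N
      = - (2 * pi * (real (a - 1) * (real n - real k)) / real N) + 2 * pi * of_int (int (a - 1) * q)"
    unfolding c dm using N by (simp add: field_simps)
  have "cis (- 2 * pi * real (a - 1) * real (circC N n k - 1) / real N)
      = cis (- (2 * pi * (real (a - 1) * (real n - real k)) / real N))"
    unfolding e cis_mult[symmetric] by (simp add: cis_multiple_2pi)
  then show ?thesis
    by (simp add: Fmat_def dftU_def dft_cis_def cis_cnj)
qed

lemma sum_cmod_power2_orthogonal:
  fixes w :: "'b \<Rightarrow> 'c \<Rightarrow> complex"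
  assumes A: "finite A"
    and orth: "\<And>a b. a \<in> A \<Longrightarrow> b \<in> A \<Longrightarrow>
                 (\<Sum>n\<in>T. w a n * cnj (w b n)) = (if a = b then of_real c else 0)"
  shows "(\<Sum>n\<in>T. (cmod (\<Sum>a\<in>A. x a * w a n))\<^sup>2) = c * (\<Sum>a\<in>A. (cmod (x a))\<^sup>2)"
proof -
  have "(\<Sum>n\<in>T. (cmod (\<Sum>a\<in>A. x a * w a n))\<^sup>2)
      = Re (\<Sum>n\<in>T. \<Sum>a\<in>A. \<Sum>b\<in>A. x a * cnj (x b) * (w a n * cnj (w b n)))"
    unfolding cmod_power2_eq_Re Re_sum by (simp add: cnj_sum sum_product mult_ac)
  also have "\<dots> = Re (\<Sum>a\<in>A. \<Sum>b\<in>A. x a * cnj (x b) * (\<Sum>n\<in>T. w a n * cnj (w b n)))"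
    by (simp add: sum_distrib_left sum.swap[of _ T])
  also have "\<dots> = Re (\<Sum>a\<in>A. x a * cnj (x a) * of_real c)"
    using A orth by (simp add: if_distrib[of "\<lambda>x. _ * x"] cong: if_cong)
  also have "\<dots> = c * (\<Sum>a\<in>A. (cmod (x a))\<^sup>2)"
    by (simp add: cmod_power2_eq_Re sum_distrib_left mult.commute)
  finally show ?thesis .
qed

lemma inner_Fmat_rows:
  assumes N: "N > 0" and a: "a \<in> {1..N}" and b: "b \<in> {1..N}"
  shows "(\<Sum>n\<in>{1..N}. cnj (Fmat N k a n) * Fmat N k' b n)
     = (if a = b then dft_cis N (real (a - 1) * (real k' - real k)) else 0)"
proof -
  define C where "C = real (b - 1) * real k' - real (a - 1) * real k"
  have "cnj (Fmat N k a n) * Fmat N k' b n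
      = dft_cis N C / of_nat N * dft_cis N (of_int (int a - int b) * real n)" for n
  proof -
    have "dft_cis N (real (a - 1) * (real n - real k)) * dft_cis N (- (real (b - 1) * (real n - real k')))
        = dft_cis N (of_int (int a - int b) * real n + C)"
      unfolding dft_cis_add[symmetric] C_def using a b
      by (intro arg_cong[where f = "dft_cis N"]) (simp add: of_nat_diff algebra_simps)
    moreover have "of_real (sqrt (real N)) * of_real (sqrt (real N)) = (of_nat N :: complex)"
      by (simp flip: of_real_mult)
    ultimately show ?thesis
      by (simp add: Fmat_eq_dft_cis[OF N] cnj_dft_cis dft_cis_add mult_ac)
  qed
  then have "(\<Sum>n\<in>{1..N}. cnj (Fmat N k a n) * Fmat N k' b n)
      = dft_cis N C / of_nat N * (\<Sum>n\<in>{1..N}. dft_cis N (of_int (int a - int b) * real n))"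
    by (simp add: sum_distrib_left)
  also have "\<dots> = (if a = b then dft_cis N C else 0)"
    unfolding sum_dft_cis_diff[OF N a b] using N by simp
  finally show ?thesis
    by (simp add: C_def right_diff_distrib)
qed

lemma vfun_eq:
  assumes N: "N > 0"
  shows "vfun N k k' hk h
       = (\<Sum>a\<in>{1..N}. htilde h a * cnj (hk a) * dft_cis N (real (a - 1) * (real k' - real k)))"
proof -
  have "vfun N k k' hk h = (\<Sum>a\<in>{1..N}. \<Sum>b\<in>{1..N}. htilde h a * cnj (hk b) *
          (\<Sum>n\<in>{1..N}. cnj (Fmat N k a n) * Fmat N k' b n))"
    unfolding vfun_def
    by (rule sum.cong[OF refl], subst sum.swap) (simp add: sum_distrib_left mult_ac)
  also have "\<dots> = (\<Sum>a\<in>{1..N}. \<Sum>b\<in>{1..N}. htilde h a * cnj (hk b) *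
          (if a = b then dft_cis N (real (a - 1) * (real k' - real k)) else 0))"
    by (rule sum.cong[OF refl], rule sum.cong[OF refl], subst inner_Fmat_rows[OF N]) auto
  also have "\<dots> = (\<Sum>a\<in>{1..N}. htilde h a * cnj (hk a) * dft_cis N (real (a - 1) * (real k' - real k)))"
    by (rule sum.cong[OF refl]) (simp add: if_distrib[of "\<lambda>x. _ * x"] cong: if_cong)
  finally show ?thesis .
qed

lemma sum_cmod_power2_vfun:
  assumes N: "N > 0"
  shows "(\<Sum>k'\<in>{1..N}. (cmod (vfun N k k' hk h))\<^sup>2)
       = real N * (\<Sum>a\<in>{1..N}. (cmod (htilde h a * cnj (hk a)))\<^sup>2)"
proof -
  let ?w = "\<lambda>a k'. dft_cis N (real (a - 1) * (real k' - real k))"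
  have "(\<Sum>k'\<in>{1..N}. ?w a k' * cnj (?w b k')) = (if a = b then of_real (real N) else 0)"
    if a: "a \<in> {1..N}" and b: "b \<in> {1..N}" for a b
  proof -
    have "?w a k' * cnj (?w b k')
        = dft_cis N (- (of_int (int a - int b) * real k)) * dft_cis N (of_int (int a - int b) * real k')" for k'
      unfolding cnj_dft_cis dft_cis_add[symmetric] using a b
      by (intro arg_cong[where f = "dft_cis N"]) (simp add: of_nat_diff algebra_simps)
    then have "(\<Sum>k'\<in>{1..N}. ?w a k' * cnj (?w b k'))
        = dft_cis N (- (of_int (int a - int b) * real k)) * (\<Sum>k'\<in>{1..N}. dft_cis N (of_int (int a - int b) * real k'))"
      by (simp only: sum_distrib_left)
    then show ?thesis
      unfolding sum_dft_cis_diff[OF N a b] by (simp add: dft_cis_def)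
  qed
  then show ?thesis
    unfolding vfun_eq[OF N] by (intro sum_cmod_power2_orthogonal) auto
qed

lemma sum_cmod_power2_combined_noise:
  assumes N: "N > 0"
  shows "(\<Sum>n\<in>{1..N}. (cmod (\<Sum>a\<in>{1..N}. x a * cnj (Fmat N k a n)))\<^sup>2) = (\<Sum>a\<in>{1..N}. (cmod (x a))\<^sup>2)"
proof -
  have "(\<Sum>n\<in>{1..N}. cnj (Fmat N k a n) * cnj (cnj (Fmat N k b n))) = (if a = b then of_real 1 else 0)"
    if "a \<in> {1..N}" "b \<in> {1..N}" for a b
    using inner_Fmat_rows[OF N that, of k k] by (simp add: dft_cis_def)
  then show ?thesis
    using sum_cmod_power2_orthogonal[where A = "{1..N}" and T = "{1..N}" and c = 1
        and w = "\<lambda>a n. cnj (Fmat N k a n)"] by simp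
qed

lemma cmod_arr [simp]: "cmod (arr \<theta> n) = 1"
  by (simp add: arr_def)

lemma arr_Suc_0 [simp]: "arr \<theta> (Suc 0) = 1"
  by (simp add: arr_def)

lemma cnj_arr_mult: "cnj (arr \<theta> n) * arr \<theta> n = 1"
  by (simp add: arr_def cis_cnj cis_mult)

lemma htilde_scaled_arr:
  assumes "\<alpha> \<noteq> 0"
  shows "htilde (\<lambda>n. \<alpha> * arr \<phi> n) a = arr \<phi> a / cnj \<alpha>"
proof -
  have "cnj (arr \<phi> a) * arr \<phi> a = 1"
    by (rule cnj_arr_mult)
  moreover from this have "cnj (arr \<phi> a) \<noteq> 0"
    by auto
  ultimately show ?thesis
    using assms by (simp add: htilde_def field_simps)
qed

lemma arr_arcsin_sin: "arr (arcsin (sin \<theta>)) = arr \<theta>"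
  by (simp add: arr_def fun_eq_iff)

lemma arcsin_sin_in_period: "arcsin (sin \<theta>) \<in> {-pi..<pi}"
proof -
  have "- (pi / 2) \<le> arcsin (sin \<theta>)" "arcsin (sin \<theta>) \<le> pi / 2"
    using arcsin_bounded[OF sin_ge_minus_one sin_le_one] by auto
  then show ?thesis
    using pi_gt_zero unfolding atLeastLessThan_iff by linarith
qed

definition steering_corr :: "nat \<Rightarrow> real \<Rightarrow> real \<Rightarrow> complex" where
  "steering_corr N \<phi> \<theta> = (\<Sum>n\<in>{1..N}. arr \<phi> n * cnj (arr \<theta> n))"

lemma cmod_steering_corr_le: "cmod (steering_corr N \<phi> \<theta>) \<le> real N"
proof -
  have "cmod (steering_corr N \<phi> \<theta>) \<le> (\<Sum>n\<in>{1..N}. cmod (arr \<phi> n * cnj (arr \<theta> n)))"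
    unfolding steering_corr_def by (rule norm_sum)
  then show ?thesis
    by (simp add: norm_mult)
qed

lemma steering_corr_arcsin_sin: "steering_corr N (arcsin (sin \<theta>)) \<theta> = of_nat N"
  by (simp add: steering_corr_def arr_arcsin_sin mult.commute[of "arr \<theta> _"] cnj_arr_mult)

lemma arr_eq_if_steering_corr_ge:
  assumes big: "real N \<le> cmod (steering_corr N \<phi> \<theta>)" and n: "n \<in> {1..N}"
  shows "arr \<phi> n = arr \<theta> n"
proof -
  have eq: "arr \<phi> a * cnj (arr \<theta> a) * of_nat N = steering_corr N \<phi> \<theta>" if "a \<in> {1..N}" for a
    using norm_sum_unit_ge_card_imp_eq[of "{1..N}" "\<lambda>a. arr \<phi> a * cnj (arr \<theta> a)"] big that
    by (simp add: steering_corr_def norm_mult)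
  have "steering_corr N \<phi> \<theta> = of_nat N"
    using eq[of 1] n by simp
  with eq[OF n] have "arr \<phi> n * cnj (arr \<theta> n) = 1"
    using n by simp
  then have "arr \<phi> n * (cnj (arr \<theta> n) * arr \<theta> n) = arr \<theta> n"
    by (simp add: mult.assoc[symmetric])
  then show ?thesis
    by (simp add: cnj_arr_mult)
qed

locale signal_noise_model = prob_space M for M :: "'a measure" +
  fixes N :: nat and sigma2 :: real and s z :: "nat \<Rightarrow> 'a \<Rightarrow> complex"
  assumes s_meas: "\<forall>i\<in>{1..N}. s i \<in> borel_measurable M"
    and z_meas: "\<forall>i\<in>{1..N}. z i \<in> borel_measurable M"
    and s_cov: "\<forall>i\<in>{1..N}. \<forall>j\<in>{1..N}.
                  integrable M (\<lambda>\<omega>. s i \<omega> * cnj (s j \<omega>)) \<and>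
                  integral\<^sup>L M (\<lambda>\<omega>. s i \<omega> * cnj (s j \<omega>)) = (if i = j then 1 else 0)"
    and z_mean: "\<forall>i\<in>{1..N}. integrable M (z i) \<and> integral\<^sup>L M (z i) = 0"
    and z_cov: "\<forall>i\<in>{1..N}. \<forall>j\<in>{1..N}.
                  integrable M (\<lambda>\<omega>. z i \<omega> * cnj (z j \<omega>)) \<and>
                  integral\<^sup>L M (\<lambda>\<omega>. z i \<omega> * cnj (z j \<omega>))
                    = (if i = j then complex_of_real sigma2 else 0)"
    and indep: "indep_var
                  (Pi\<^sub>M {1..N} (\<lambda>_. borel)) (\<lambda>\<omega>. restrict (\<lambda>i. s i \<omega>) {1..N})
                  (Pi\<^sub>M {1..N} (\<lambda>_. borel)) (\<lambda>\<omega>. restrict (\<lambda>i. z i \<omega>) {1..N})"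
begin

lemma signal_noise_uncorrelated:
  assumes i: "i \<in> {1..N}" and n: "n \<in> {1..N}"
  shows "integrable M (\<lambda>\<omega>. s i \<omega> * cnj (z n \<omega>)) \<and> (\<integral>\<omega>. s i \<omega> * cnj (z n \<omega>) \<partial>M) = 0"
proof -
  have "(\<lambda>f. cnj (f n)) \<in> borel_measurable (Pi\<^sub>M {1..N} (\<lambda>_. borel :: complex measure))"
    using n by (intro borel_measurable_continuous_on[where f = cnj])
      (auto intro!: continuous_intros measurable_component_singleton)
  then have iv: "indep_var borel (s i) borel (\<lambda>\<omega>. cnj (z n \<omega>))"
    using indep_var_compose[OF indep, of "\<lambda>f. f i" borel "\<lambda>f. cnj (f n)" borel] i n
    by (simp add: comp_def)
  have "integrable M (s i)"
    using integrable_of_integrable_mult_cnj s_meas s_cov i by blast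
  moreover have "integrable M (\<lambda>\<omega>. cnj (z n \<omega>))" "(\<integral>\<omega>. cnj (z n \<omega>) \<partial>M) = 0"
    using z_mean n by auto
  ultimately show ?thesis
    using indep_var_lebesgue_integral[OF iv] indep_var_integrable[OF iv] by simp
qed

lemma signal_noise_cov:
  assumes p: "p \<in> {1..N} <+> {1..N}" and q: "q \<in> {1..N} <+> {1..N}"
  shows "integrable M (\<lambda>\<omega>. case_sum s z p \<omega> * cnj (case_sum s z q \<omega>)) \<and>
    (\<integral>\<omega>. case_sum s z p \<omega> * cnj (case_sum s z q \<omega>) \<partial>M)
      = (if p = q then of_real (case_sum (\<lambda>_. 1) (\<lambda>_. sigma2) p) else 0)"
proof -
  have "integrable M (\<lambda>\<omega>. z n \<omega> * cnj (s i \<omega>)) \<and> (\<integral>\<omega>. z n \<omega> * cnj (s i \<omega>) \<partial>M) = 0"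
    if "i \<in> {1..N}" "n \<in> {1..N}" for i n
  proof -
    have "(\<lambda>\<omega>. z n \<omega> * cnj (s i \<omega>)) = (\<lambda>\<omega>. cnj (s i \<omega> * cnj (z n \<omega>)))"
      by (simp add: mult.commute)
    with signal_noise_uncorrelated[OF that] show ?thesis
      by (simp only: Bochner_Integration.integral_cnj complex_cnj_zero integrable_cnj)
  qed
  then show ?thesis
    using p q s_cov z_cov signal_noise_uncorrelated by (auto elim!: PlusE)
qed

lemma integral_cmod_signal_noise_power2:
  assumes S: "S \<subseteq> {1..N}" and T: "T \<subseteq> {1..N}"
  shows "(\<integral>\<omega>. (cmod ((\<Sum>i\<in>S. a i * s i \<omega>) + (\<Sum>n\<in>T. b n * z n \<omega>)))\<^sup>2 \<partial>M)
       = (\<Sum>i\<in>S. (cmod (a i))\<^sup>2) + sigma2 * (\<Sum>n\<in>T. (cmod (b n))\<^sup>2)"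
proof -
  have fin: "finite S" "finite T"
    using S T finite_subset by blast+
  have "(\<Sum>i\<in>S. a i * s i \<omega>) + (\<Sum>n\<in>T. b n * z n \<omega>)
      = (\<Sum>p\<in>S <+> T. case_sum a b p * case_sum s z p \<omega>)" for \<omega>
    using fin by (simp add: sum.Plus comp_def)
  moreover have "p \<in> S <+> T \<Longrightarrow> q \<in> S <+> T \<Longrightarrow>
      integrable M (\<lambda>\<omega>. case_sum s z p \<omega> * cnj (case_sum s z q \<omega>)) \<and>
      (\<integral>\<omega>. case_sum s z p \<omega> * cnj (case_sum s z q \<omega>) \<partial>M)
        = (if p = q then of_real (case_sum (\<lambda>_. 1) (\<lambda>_. sigma2) p) else 0)" for p q
    using S T by (intro signal_noise_cov) auto
  ultimately have "(\<integral>\<omega>. (cmod ((\<Sum>i\<in>S. a i * s i \<omega>) + (\<Sum>n\<in>T. b n * z n \<omega>)))\<^sup>2 \<partial>M)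
      = (\<Sum>p\<in>S <+> T. (cmod (case_sum a b p))\<^sup>2 * case_sum (\<lambda>_. 1) (\<lambda>_. sigma2) p)"
    using fin by (simp add: integral_cmod_sum_power2_uncorrelated)
  also have "\<dots> = (\<Sum>i\<in>S. (cmod (a i))\<^sup>2) + sigma2 * (\<Sum>n\<in>T. (cmod (b n))\<^sup>2)"
    using fin by (simp add: sum.Plus comp_def sum_distrib_left mult.commute)
  finally show ?thesis .
qed

lemma SINR_eq:
  assumes N: "N > 0" and pt: "pt \<ge> 0" and k: "k \<in> {1..N}"
  shows "SINR M N pt k hk s z h =
      (pt / real N * (cmod (gfun N k hk h))\<^sup>2) /
      (pt / real N * (\<Sum>k'\<in>{1..N} - {k}. (cmod (vfun N k k' hk h))\<^sup>2)
       + sigma2 * (\<Sum>n\<in>{1..N}. (cmod (\<Sum>a\<in>{1..N}. htilde h a * cnj (Fmat N k a n)))\<^sup>2))"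
proof -
  define c0 where "c0 = complex_of_real (sqrt (pt / real N))"
  have c0: "(cmod (c0 * x))\<^sup>2 = pt / real N * (cmod x)\<^sup>2" for x
    using pt N by (simp add: c0_def norm_mult power_mult_distrib)
  have Psig_eq: "Psig N pt k hk s h \<omega>
      = (\<Sum>i\<in>{k}. (c0 * gfun N k hk h) * s i \<omega>) + (\<Sum>n\<in>{}. 0 * z n \<omega>)" for \<omega>
    by (simp add: Psig_def c0_def mult_ac)
  have P: "(\<integral>\<omega>. (cmod (Psig N pt k hk s h \<omega>))\<^sup>2 \<partial>M) = pt / real N * (cmod (gfun N k hk h))\<^sup>2"
    unfolding Psig_eq using k by (subst integral_cmod_signal_noise_power2) (auto simp: c0)
  have Iint_eq: "Iint N pt k hk s z h \<omega>
      = (\<Sum>i\<in>{1..N} - {k}. (c0 * vfun N k i hk h) * s i \<omega>)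
        + (\<Sum>n\<in>{1..N}. (\<Sum>a\<in>{1..N}. htilde h a * cnj (Fmat N k a n)) * z n \<omega>)" for \<omega>
  proof -
    have "(\<Sum>a\<in>{1..N}. \<Sum>n\<in>{1..N}. htilde h a * cnj (Fmat N k a n) * z n \<omega>)
        = (\<Sum>n\<in>{1..N}. (\<Sum>a\<in>{1..N}. htilde h a * cnj (Fmat N k a n)) * z n \<omega>)"
      by (subst sum.swap) (simp add: sum_distrib_right)
    then show ?thesis
      unfolding Iint_def c0_def[symmetric] by (simp add: sum_distrib_left mult_ac)
  qed
  have I: "(\<integral>\<omega>. (cmod (Iint N pt k hk s z h \<omega>))\<^sup>2 \<partial>M)
      = pt / real N * (\<Sum>k'\<in>{1..N} - {k}. (cmod (vfun N k k' hk h))\<^sup>2)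
       + sigma2 * (\<Sum>n\<in>{1..N}. (cmod (\<Sum>a\<in>{1..N}. htilde h a * cnj (Fmat N k a n)))\<^sup>2)"
    unfolding Iint_eq by (subst integral_cmod_signal_noise_power2) (auto simp: c0 sum_distrib_left)
  show ?thesis
    unfolding SINR_def P I ..
qed

lemma SINR_line_of_sight:
  assumes N: "N > 0" and pt: "pt \<ge> 0" and k: "k \<in> {1..N}" and \<alpha>h: "\<alpha>h \<noteq> 0"
  shows "SINR M N pt k (\<lambda>n. \<alpha> * arr \<theta> n) s z (\<lambda>n. \<alpha>h * arr \<phi> n)
       = pt / real N * (cmod \<alpha> / cmod \<alpha>h)\<^sup>2 * (cmod (steering_corr N \<phi> \<theta>))\<^sup>2 /
         (pt / real N * (cmod \<alpha> / cmod \<alpha>h)\<^sup>2 * ((real N)\<^sup>2 - (cmod (steering_corr N \<phi> \<theta>))\<^sup>2)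
          + sigma2 * real N / (cmod \<alpha>h)\<^sup>2)"
proof -
  let ?hk = "\<lambda>n. \<alpha> * arr \<theta> n" and ?h = "\<lambda>n. \<alpha>h * arr \<phi> n"
  define \<rho> where "\<rho> = (cmod \<alpha> / cmod \<alpha>h)\<^sup>2"
  define G where "G = (cmod (steering_corr N \<phi> \<theta>))\<^sup>2"
  have r: "htilde ?h a * cnj (?hk a) = cnj \<alpha> / cnj \<alpha>h * (arr \<phi> a * cnj (arr \<theta> a))" for a
    by (simp add: htilde_scaled_arr[OF \<alpha>h])
  have "gfun N k ?hk ?h = cnj \<alpha> / cnj \<alpha>h * steering_corr N \<phi> \<theta>"
    unfolding gfun_def vfun_eq[OF N] r steering_corr_def sum_distrib_left by (simp add: dft_cis_def)
  then have g: "(cmod (gfun N k ?hk ?h))\<^sup>2 = \<rho> * G"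
    by (simp add: norm_mult norm_divide power_mult_distrib power_divide \<rho>_def G_def)
  have "(\<Sum>k'\<in>{1..N}. (cmod (vfun N k k' ?hk ?h))\<^sup>2) = \<rho> * (real N)\<^sup>2"
    unfolding sum_cmod_power2_vfun[OF N] r
    by (simp add: norm_mult norm_divide power_mult_distrib power_divide \<rho>_def power2_eq_square)
  then have v: "(\<Sum>k'\<in>{1..N} - {k}. (cmod (vfun N k k' ?hk ?h))\<^sup>2) = \<rho> * ((real N)\<^sup>2 - G)"
    using k g by (simp add: sum.remove gfun_def right_diff_distrib)
  have noise: "(\<Sum>n\<in>{1..N}. (cmod (\<Sum>a\<in>{1..N}. htilde ?h a * cnj (Fmat N k a n)))\<^sup>2) = real N / (cmod \<alpha>h)\<^sup>2"
    unfolding sum_cmod_power2_combined_noise[OF N] htilde_scaled_arr[OF \<alpha>h]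
    by (simp add: norm_divide power_divide)
  show ?thesis
    unfolding SINR_eq[OF N pt k] g v noise \<rho>_def[symmetric] G_def[symmetric]
    by (simp add: mult_ac)
qed

end

theorem corollary1:
  fixes M :: "'a measure"
    and N k :: nat and pt sigma2 \<theta> :: real and \<alpha> \<alpha>h :: complex
    and s z :: "nat \<Rightarrow> 'a \<Rightarrow> complex"
  assumes N2: "N \<ge> 2"
    and pt: "pt > 0"
    and sig: "sigma2 > 0"
    and k: "k \<in> {1..N}"
    and alpha: "\<alpha> \<noteq> 0"
    and alphah: "\<alpha>h \<noteq> 0"
    and M: "prob_space M"
    and s_meas: "\<forall>i\<in>{1..N}. s i \<in> borel_measurable M"
    and z_meas: "\<forall>i\<in>{1..N}. z i \<in> borel_measurable M"
    and s_cov: "\<forall>i\<in>{1..N}. \<forall>j\<in>{1..N}.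
                  integrable M (\<lambda>\<omega>. s i \<omega> * cnj (s j \<omega>)) \<and>
                  integral\<^sup>L M (\<lambda>\<omega>. s i \<omega> * cnj (s j \<omega>)) = (if i = j then 1 else 0)"
    and z_mean: "\<forall>i\<in>{1..N}. integrable M (z i) \<and> integral\<^sup>L M (z i) = 0"
    and z_cov: "\<forall>i\<in>{1..N}. \<forall>j\<in>{1..N}.
                  integrable M (\<lambda>\<omega>. z i \<omega> * cnj (z j \<omega>)) \<and>
                  integral\<^sup>L M (\<lambda>\<omega>. z i \<omega> * cnj (z j \<omega>))
                    = (if i = j then complex_of_real sigma2 else 0)"
    and indep: "prob_space.indep_var M
                  (Pi\<^sub>M {1..N} (\<lambda>_. borel)) (\<lambda>\<omega>. restrict (\<lambda>i. s i \<omega>) {1..N})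
                  (Pi\<^sub>M {1..N} (\<lambda>_. borel)) (\<lambda>\<omega>. restrict (\<lambda>i. z i \<omega>) {1..N})"
  shows "(\<exists>\<phi>\<in>{-pi..<pi}. \<forall>\<psi>\<in>{-pi..<pi}.
             SINR M N pt k (\<lambda>n. \<alpha> * arr \<theta> n) s z (\<lambda>n. \<alpha>h * arr \<psi> n)
             \<le> SINR M N pt k (\<lambda>n. \<alpha> * arr \<theta> n) s z (\<lambda>n. \<alpha>h * arr \<phi> n))
       \<and> (\<forall>\<phi>\<in>{-pi..<pi}.
             (\<forall>\<psi>\<in>{-pi..<pi}.
                SINR M N pt k (\<lambda>n. \<alpha> * arr \<theta> n) s z (\<lambda>n. \<alpha>h * arr \<psi> n)
                \<le> SINR M N pt k (\<lambda>n. \<alpha> * arr \<theta> n) s z (\<lambda>n. \<alpha>h * arr \<phi> n))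
             \<longrightarrow> (\<forall>n\<in>{1..N}. arr \<phi> n = arr \<theta> n))"
proof -
  interpret signal_noise_model M N sigma2 s z
    using M s_meas z_meas s_cov z_mean z_cov indep
    by (simp add: signal_noise_model_def signal_noise_model_axioms_def)
  define B where "B = pt / real N * (cmod \<alpha> / cmod \<alpha>h)\<^sup>2"
  define C where "C = sigma2 * real N / (cmod \<alpha>h)\<^sup>2"
  define G where "G \<phi> = (cmod (steering_corr N \<phi> \<theta>))\<^sup>2" for \<phi>
  have N: "N > 0" and B: "B > 0" and C: "C > 0"
    using N2 pt sig alpha alphah by (simp_all add: B_def C_def)
  have SINR: "SINR M N pt k (\<lambda>n. \<alpha> * arr \<theta> n) s z (\<lambda>n. \<alpha>h * arr \<phi> n)
      = B * G \<phi> / (B * ((real N)\<^sup>2 - G \<phi>) + C)" for \<phi>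
    unfolding B_def C_def G_def using pt by (intro SINR_line_of_sight N k alphah) simp
  have G_le: "G \<phi> \<le> (real N)\<^sup>2" for \<phi>
    unfolding G_def by (simp add: cmod_steering_corr_le power_mono)
  define \<phi>\<^sub>0 where "\<phi>\<^sub>0 = arcsin (sin \<theta>)"
  have \<phi>\<^sub>0: "\<phi>\<^sub>0 \<in> {-pi..<pi}" "G \<phi>\<^sub>0 = (real N)\<^sup>2"
    unfolding \<phi>\<^sub>0_def G_def by (rule arcsin_sin_in_period) (simp add: steering_corr_arcsin_sin)
  have optimal: "B * G \<psi> / (B * ((real N)\<^sup>2 - G \<psi>) + C) \<le> B * G \<phi>\<^sub>0 / (B * ((real N)\<^sup>2 - G \<phi>\<^sub>0) + C)"
    for \<psi>
    using gain_fraction_max(1)[OF B C G_le] \<phi>\<^sub>0(2) by simp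
  have "arr \<phi> n = arr \<theta> n"
    if "B * G \<phi>\<^sub>0 / (B * ((real N)\<^sup>2 - G \<phi>\<^sub>0) + C) \<le> B * G \<phi> / (B * ((real N)\<^sup>2 - G \<phi>) + C)"
      and "n \<in> {1..N}" for \<phi> n
  proof -
    have "(real N)\<^sup>2 \<le> G \<phi>"
      using gain_fraction_max(2)[OF B C G_le] that(1) by (simp add: \<phi>\<^sub>0(2))
    then have "real N \<le> cmod (steering_corr N \<phi> \<theta>)"
      unfolding G_def by (rule power2_le_imp_le) simp
    then show ?thesis
      using that(2) by (rule arr_eq_if_steering_corr_ge)
  qed
  then show ?thesis
    unfolding SINR using \<phi>\<^sub>0(1) optimal by blast
qed

end
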